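(* Let $(A,\succ,\prec)$ be a Leibniz-dendriform algebra and $r\in A\otimes A$. If $r$ satisfies the Leibniz-dendriform Yang–Baxter equation $S(r)=0$ and $r+\tau(r)$ is invariant, then $(A,\succ,\prec,\Delta_{\succ,r},\Delta_{\prec,r})$ is a Leibniz-dendriform bialgebra (called quasi-triangular).
   Context: All vector spaces are finite-dimensional over a field $k$; $I$ the identity, $\tau(a\otimes b)=b\otimes a$. A Leibniz-dendriform algebra is a vector space $A$ with bilinear operations $\succ,\prec$ such that, with $x\circ y:=x\succ y+x\prec y$, for all $x,y,z\in A$: $(x\circ y)\succ z=x\succ(y\succ z)-y\succ(x\succ z)$, $y\prec(x\circ z)+(x\succ y)\prec z=x\succ(y\prec z)$, $x\prec(y\circ z)=(x\prec y)\prec z+y\succ(x\prec z)$. Write $x\odot y:=x\succ y+y\prec x$, $x\star y:=x\circ y+y\circ x$. For a binary operation $*$ let $L_*(x)y=x*y$, $R_*(x)y=y*x$; $L_\odot:=L_\succ+R_\prec$, $R_\odot:=R_\succ+L_\prec$, $L_\star:=L_\circ+R_\circ$. For $r=\sum_i a_i\otimes b_i$: $S(r):=\sum_{i,j}\big(a_i\otimes a_j\otimes (b_j\circ b_i)-a_i\otimes (b_i\odot a_j)\otimes b_j-(a_i\succ a_j)\otimes b_i\otimes b_j\big)$. An element $s\in A\otimes A$ is invariant if for all $x$: $(L_\odot(x)\otimes I-I\otimes R_\circ(x))s=0$ and $(L_\star(x)\otimes I-I\otimes R_\prec(x))\tau(s)=0$. Coboundary maps: $\Delta_{\succ,r}(x)=(L_\odot(x)\otimes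 I-I\otimes R_\circ(x))r$, $\Delta_{\prec,r}(x)=(L_\star(x)\otimes I-I\otimes R_\prec(x))\tau(r)$. A Leibniz-dendriform bialgebra is $(A,\succ,\prec,\Delta_\succ,\Delta_\prec)$ with $(A,\succ,\prec)$ a Leibniz-dendriform algebra and linear $\Delta_\succ,\Delta_\prec:A\to A\otimes A$ such that, with $\Delta:=\Delta_\succ+\Delta_\prec$ and $\Delta_\odot:=\Delta_\succ+\tau\Delta_\prec$: $(\Delta\otimes I)\Delta_\succ=(I\otimes\Delta_\succ)\Delta_\succ-(\tau\otimes I)(I\otimes\Delta_\succ)\Delta_\succ$; $(I\otimes\Delta_\prec)\Delta_\succ-(\Delta_\succ\otimes I)\Delta_\prec=(\tau\otimes I)(I\otimes\Delta)\Delta_\prec$; $(I\otimes\Delta)\Delta_\prec=(\Delta_\prec\otimes I)\Delta_\prec+(\tau\otimes I)(I\otimes\Delta_\prec)\Delta_\succ$; and for all $x,y\in A$: (B1) $\Delta(x\odot y)-(I\otimes L_\odot(x))\Delta(y)+\tau(I\otimes L_\odot(x))\Delta(y)+\tau(I\otimes R_\odot(y))\Delta_\succ(x)-(I\otimes R_\odot(y))\Delta_\succ(x)=0$; (B2) $\Delta(x\succ y)-(L_\succ(x)\otimes I+I\otimes L_\succ(x))\Delta(y)-(I\otimes R_\succ(y))\Delta_\odot(x)+\tau(I\otimes R_\odot(y))\Delta_\odot(x)=0$; (B3) $(I\otimes R_\succ(y))\tau\Delta_\prec(x)-(R_\prec(x)\otimes I)\Delta(y)=0$; (B4) $(\Delta_\succ+\tau\Delta_\prec)(x\circ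 y)-(I\otimes L_\circ(x)+L_\succ(x)\otimes I)\Delta_\odot(y)+(I\otimes L_\circ(y)+L_\succ(y)\otimes I)\Delta_\odot(x)=0$; (B5) $\Delta_\succ(x\circ y)-(I\otimes R_\circ(y))\Delta_\succ(x)-(I\otimes L_\circ(x)+L_\odot(x)\otimes I)\Delta_\succ(y)+(L_\odot(y)\otimes I)\Delta_\odot(x)=0$; (B6) $(I\otimes R_\circ(y))\tau\Delta_\prec(x)-(R_\prec(x)\otimes I)\Delta_\succ(y)=0$. *)

theory Defs
  imports Main "HOL-Library.Function_Algebras"
begin

text \<open>A finite-dimensional vector space A over a field 'k is modelled
  as the coordinate space 'i \<Rightarrow> 'k over a finite basis index type 'i.
  A \<otimes> A is 'i \<times> 'i \<Rightarrow> 'k and A \<otimes> A \<otimes> A is 'i \<times> 'i \<times> 'i \<Rightarrow> 'k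
  (coefficients with respect to the tensor basis).\<close>

definition ev :: "'i \<Rightarrow> 'i \<Rightarrow> 'k::zero_neq_one" where
  "ev i = (\<lambda>j. if j = i then 1 else 0)"

definition smul :: "'k::times \<Rightarrow> ('j \<Rightarrow> 'k) \<Rightarrow> ('j \<Rightarrow> 'k)" where
  "smul c x = (\<lambda>j. c * x j)"

definition bilinear_op :: "(('i \<Rightarrow> 'k::field) \<Rightarrow> ('i \<Rightarrow> 'k) \<Rightarrow> ('i \<Rightarrow> 'k)) \<Rightarrow> bool" where
  "bilinear_op f \<longleftrightarrow>
     (\<forall>x y z. f (x + y) z = f x z + f y z) \<and>
     (\<forall>x y z. f x (y + z) = f x y + f x z) \<and>
     (\<forall>c x y. f (smul c x) y = smul c (f x y)) \<and>
     (\<forall>c x y. f x (smul c y) = smul c (f x y))"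

definition linear_map :: "(('i \<Rightarrow> 'k::field) \<Rightarrow> ('j \<Rightarrow> 'k)) \<Rightarrow> bool" where
  "linear_map f \<longleftrightarrow> (\<forall>x y. f (x + y) = f x + f y) \<and> (\<forall>c x. f (smul c x) = smul c (f x))"

definition tens2 :: "('i \<Rightarrow> 'k::times) \<Rightarrow> ('i \<Rightarrow> 'k) \<Rightarrow> ('i \<times> 'i \<Rightarrow> 'k)" where
  "tens2 x y = (\<lambda>(a, b). x a * y b)"

definition tens3 :: "('i \<Rightarrow> 'k::times) \<Rightarrow> ('i \<Rightarrow> 'k) \<Rightarrow> ('i \<Rightarrow> 'k) \<Rightarrow> ('i \<times> 'i \<times> 'i \<Rightarrow> 'k)" where
  "tens3 x y z = (\<lambda>(a, b, c). x a * y b * z c)"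

definition tens21 :: "('i \<times> 'i \<Rightarrow> 'k::times) \<Rightarrow> ('i \<Rightarrow> 'k) \<Rightarrow> ('i \<times> 'i \<times> 'i \<Rightarrow> 'k)" where
  "tens21 t z = (\<lambda>(a, b, c). t (a, b) * z c)"

definition tens12 :: "('i \<Rightarrow> 'k::times) \<Rightarrow> ('i \<times> 'i \<Rightarrow> 'k) \<Rightarrow> ('i \<times> 'i \<times> 'i \<Rightarrow> 'k)" where
  "tens12 x t = (\<lambda>(a, b, c). x a * t (b, c))"

text \<open>(f \<otimes> g) t for linear f g : A \<rightarrow> A.\<close>
definition map2 :: "(('i::finite \<Rightarrow> 'k::field) \<Rightarrow> ('i \<Rightarrow> 'k)) \<Rightarrow> (('i \<Rightarrow> 'k) \<Rightarrow> ('i \<Rightarrow> 'k))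
    \<Rightarrow> ('i \<times> 'i \<Rightarrow> 'k) \<Rightarrow> ('i \<times> 'i \<Rightarrow> 'k)" where
  "map2 f g t = (\<Sum>c\<in>UNIV. \<Sum>d\<in>UNIV. smul (t (c, d)) (tens2 (f (ev c)) (g (ev d))))"

text \<open>(D \<otimes> I) t and (I \<otimes> D) t for linear D : A \<rightarrow> A \<otimes> A.\<close>
definition mapD_I :: "(('i::finite \<Rightarrow> 'k::field) \<Rightarrow> ('i \<times> 'i \<Rightarrow> 'k))
    \<Rightarrow> ('i \<times> 'i \<Rightarrow> 'k) \<Rightarrow> ('i \<times> 'i \<times> 'i \<Rightarrow> 'k)" where
  "mapD_I D t = (\<Sum>c\<in>UNIV. \<Sum>d\<in>UNIV. smul (t (c, d)) (tens21 (D (ev c)) (ev d)))"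

definition mapI_D :: "(('i::finite \<Rightarrow> 'k::field) \<Rightarrow> ('i \<times> 'i \<Rightarrow> 'k))
    \<Rightarrow> ('i \<times> 'i \<Rightarrow> 'k) \<Rightarrow> ('i \<times> 'i \<times> 'i \<Rightarrow> 'k)" where
  "mapI_D D t = (\<Sum>c\<in>UNIV. \<Sum>d\<in>UNIV. smul (t (c, d)) (tens12 (ev c) (D (ev d))))"

definition tau :: "('i \<times> 'i \<Rightarrow> 'k) \<Rightarrow> ('i \<times> 'i \<Rightarrow> 'k)" where
  "tau t = (\<lambda>(a, b). t (b, a))"

definition tau12 :: "('i \<times> 'i \<times> 'i \<Rightarrow> 'k) \<Rightarrow> ('i \<times> 'i \<times> 'i \<Rightarrow> 'k)" where
  "tau12 T = (\<lambda>(a, b, c). T (b, a, c))"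

type_synonym ('i, 'k) binop = "('i \<Rightarrow> 'k) \<Rightarrow> ('i \<Rightarrow> 'k) \<Rightarrow> ('i \<Rightarrow> 'k)"

definition circ_op :: "('i, 'k::field) binop \<Rightarrow> ('i, 'k) binop \<Rightarrow> ('i, 'k) binop" where
  "circ_op sc pr x y = sc x y + pr x y"

definition odot_op :: "('i, 'k::field) binop \<Rightarrow> ('i, 'k) binop \<Rightarrow> ('i, 'k) binop" where
  "odot_op sc pr x y = sc x y + pr y x"

definition star_op :: "('i, 'k::field) binop \<Rightarrow> ('i, 'k) binop \<Rightarrow> ('i, 'k) binop" where
  "star_op sc pr x y = circ_op sc pr x y + circ_op sc pr y x"

definition Lm :: "('i, 'k) binop \<Rightarrow> ('i \<Rightarrow> 'k) \<Rightarrow> ('i \<Rightarrow> 'k) \<Rightarrow> ('i \<Rightarrow> 'k)" where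
  "Lm m x = (\<lambda>y. m x y)"

definition Rm :: "('i, 'k) binop \<Rightarrow> ('i \<Rightarrow> 'k) \<Rightarrow> ('i \<Rightarrow> 'k) \<Rightarrow> ('i \<Rightarrow> 'k)" where
  "Rm m x = (\<lambda>y. m y x)"

definition LD_algebra :: "('i, 'k::field) binop \<Rightarrow> ('i, 'k) binop \<Rightarrow> bool" where
  "LD_algebra sc pr \<longleftrightarrow> bilinear_op sc \<and> bilinear_op pr \<and>
    (\<forall>x y z.
      sc (circ_op sc pr x y) z = sc x (sc y z) - sc y (sc x z) \<and>
      pr y (circ_op sc pr x z) + pr (sc x y) z = sc x (pr y z) \<and>
      pr x (circ_op sc pr y z) = pr (pr x y) z + sc y (pr x z))"

definition S_YB :: "('i::finite, 'k::field) binop \<Rightarrow> ('i, 'k) binop \<Rightarrow> ('i \<times> 'i \<Rightarrow> 'k)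
    \<Rightarrow> ('i \<times> 'i \<times> 'i \<Rightarrow> 'k)" where
  "S_YB sc pr r = (\<Sum>p\<in>UNIV. \<Sum>q\<in>UNIV. smul (r p * r q)
      (tens3 (ev (fst p)) (ev (fst q)) (circ_op sc pr (ev (snd q)) (ev (snd p)))
     - tens3 (ev (fst p)) (odot_op sc pr (ev (snd p)) (ev (fst q))) (ev (snd q))
     - tens3 (sc (ev (fst p)) (ev (fst q))) (ev (snd p)) (ev (snd q))))"

definition invariant :: "('i::finite, 'k::field) binop \<Rightarrow> ('i, 'k) binop \<Rightarrow> ('i \<times> 'i \<Rightarrow> 'k) \<Rightarrow> bool" where
  "invariant sc pr s \<longleftrightarrow> (\<forall>x.
     map2 (Lm (odot_op sc pr) x) id s - map2 id (Rm (circ_op sc pr) x) s = 0 \<and>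
     map2 (Lm (star_op sc pr) x) id (tau s) - map2 id (Rm pr x) (tau s) = 0)"

definition Delta_succ :: "('i::finite, 'k::field) binop \<Rightarrow> ('i, 'k) binop \<Rightarrow> ('i \<times> 'i \<Rightarrow> 'k)
    \<Rightarrow> ('i \<Rightarrow> 'k) \<Rightarrow> ('i \<times> 'i \<Rightarrow> 'k)" where
  "Delta_succ sc pr r x = map2 (Lm (odot_op sc pr) x) id r - map2 id (Rm (circ_op sc pr) x) r"

definition Delta_prec :: "('i::finite, 'k::field) binop \<Rightarrow> ('i, 'k) binop \<Rightarrow> ('i \<times> 'i \<Rightarrow> 'k)
    \<Rightarrow> ('i \<Rightarrow> 'k) \<Rightarrow> ('i \<times> 'i \<Rightarrow> 'k)" where
  "Delta_prec sc pr r x = map2 (Lm (star_op sc pr) x) id (tau r) - map2 id (Rm pr x) (tau r)"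

definition LD_bialgebra :: "('i::finite, 'k::field) binop \<Rightarrow> ('i, 'k) binop
    \<Rightarrow> (('i \<Rightarrow> 'k) \<Rightarrow> ('i \<times> 'i \<Rightarrow> 'k)) \<Rightarrow> (('i \<Rightarrow> 'k) \<Rightarrow> ('i \<times> 'i \<Rightarrow> 'k)) \<Rightarrow> bool" where
  "LD_bialgebra sc pr Ds Dp \<longleftrightarrow>
    (let D = (\<lambda>x. Ds x + Dp x);
         Do = (\<lambda>x. Ds x + tau (Dp x));
         ci = circ_op sc pr; od = odot_op sc pr; st = star_op sc pr in
    LD_algebra sc pr \<and> linear_map Ds \<and> linear_map Dp \<and>
    (\<forall>x.
      mapD_I D (Ds x) = mapI_D Ds (Ds x) - tau12 (mapI_D Ds (Ds x)) \<and>
      mapI_D Dp (Ds x) - mapD_I Ds (Dp x) = tau12 (mapI_D D (Dp x)) \<and>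
      mapI_D D (Dp x) = mapD_I Dp (Dp x) + tau12 (mapI_D Dp (Ds x))) \<and>
    (\<forall>x y.
      D (od x y) - map2 id (Lm od x) (D y) + tau (map2 id (Lm od x) (D y))
        + tau (map2 id (Rm od y) (Ds x)) - map2 id (Rm od y) (Ds x) = 0 \<and>
      D (sc x y) - (map2 (Lm sc x) id (D y) + map2 id (Lm sc x) (D y))
        - map2 id (Rm sc y) (Do x) + tau (map2 id (Rm od y) (Do x)) = 0 \<and>
      map2 id (Rm sc y) (tau (Dp x)) - map2 (Rm pr x) id (D y) = 0 \<and>
      Do (ci x y) - (map2 id (Lm ci x) (Do y) + map2 (Lm sc x) id (Do y))
        + (map2 id (Lm ci y) (Do x) + map2 (Lm sc y) id (Do x)) = 0 \<and>
      Ds (ci x y) - map2 id (Rm ci y) (Ds x)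
        - (map2 id (Lm ci x) (Ds y) + map2 (Lm od x) id (Ds y))
        + map2 (Lm od y) id (Do x) = 0 \<and>
      map2 id (Rm ci y) (tau (Dp x)) - map2 (Rm pr x) id (Ds y) = 0))"

end

theory Submission
  imports Defs
begin

text \<open>Write \<open>contract r \<Phi>\<close> for the sum of \<open>r(i,j) \<Phi>(e i, e j)\<close> over all basis pairs.
  Then \<open>Delta_succ(x) = contract r (\<lambda>a b. (x \<odot> a) \<otimes> b - a \<otimes> (b \<circ> x))\<close>, and the invariance
  of \<open>r + \<tau>(r)\<close> removes the flip from \<open>Delta_prec\<close>:
  \<open>Delta_prec(x) = contract r (\<lambda>a b. a \<otimes> (b \<prec> x) - (x \<star> a) \<otimes> b)\<close>.
  Hence each bialgebra axiom, once all maps are pushed through the contractions, says that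
  \<open>contract r \<Phi>\<close> (for (B1)--(B6)) or \<open>contract r (\<lambda>a b. contract r (\<lambda>c d. \<Psi> a b c d))\<close>
  (for the three coassociativity-type axioms) vanishes. In every case \<open>\<Phi>\<close> resp. \<open>\<Psi>\<close> is an
  explicit sum of terms of four kinds, each contracting to zero:
  \<^item> images of the summands of \<open>S(r)\<close> under a trilinear map, killed by \<open>S(r) = 0\<close>;
  \<^item> images of the summands of the two invariance conditions of \<open>r + \<tau>(r)\<close> under a bilinear map;
  \<^item> tensors with an entry that is the defect of one of the three Leibniz-dendriform identities;
  \<^item> differences \<open>K a b c d - K c d a b\<close>, whose double contraction with \<open>r\<close> vanishes by symmetry.

  That the axiom equals this sum is a coordinatewise ring identity.\<close>

section \<open>Linear algebra in coordinates\<close>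

lemma sum_fun_apply: "(sum f A) x = (\<Sum>a\<in>A. f a x)"
  by (induction A rule: infinite_finite_induct) auto

lemma smul_apply [simp]: "smul c x j = c * x j"
  by (simp add: smul_def)

lemma smul_zero [simp]: "smul (c::'k::field) 0 = 0"
  by (rule ext) simp

lemma smul_0 [simp]: "smul (0::'k::field) x = 0"
  by (rule ext) simp

lemma smul_add: "smul (c::'k::field) (x + y) = smul c x + smul c y"
  by (rule ext) (simp add: algebra_simps)

lemma smul_diff: "smul (c::'k::field) (x - y) = smul c x - smul c y"
  by (rule ext) (simp add: algebra_simps)

lemma smul_smul: "smul (a::'k::field) (smul b x) = smul (a * b) x"
  by (rule ext) (simp add: algebra_simps)

lemma smul_add_scalar: "smul ((a::'k::field) + b) x = smul a x + smul b x"
  by (rule ext) (simp add: algebra_simps)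

lemma smul_sum: "smul (c::'k::field) (sum f A) = (\<Sum>a\<in>A. smul c (f a))"
  by (rule ext) (simp add: sum_fun_apply sum_distrib_left)

lemma tens2_apply [simp]: "tens2 x y (a, b) = x a * y b"
  by (simp add: tens2_def)

lemma tens3_apply [simp]: "tens3 x y z (a, b, c) = x a * y b * z c"
  by (simp add: tens3_def)

lemma tens21_apply [simp]: "tens21 t z (a, b, c) = t (a, b) * z c"
  by (simp add: tens21_def)

lemma tens12_apply [simp]: "tens12 x t (a, b, c) = x a * t (b, c)"
  by (simp add: tens12_def)

lemma tau_apply [simp]: "tau t (a, b) = t (b, a)"
  by (simp add: tau_def)

lemma tau12_apply [simp]: "tau12 T (a, b, c) = T (b, a, c)"
  by (simp add: tau12_def)

lemma tensor2_eqI: "(\<And>a b. X (a, b) = Y (a, b)) \<Longrightarrow> X = Y"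
  by (rule ext) auto

lemma tensor3_eqI: "(\<And>a b c. X (a, b, c) = Y (a, b, c)) \<Longrightarrow> X = Y"
  by (rule ext) auto

lemma tau_add_tau: "tau (t + tau t) = t + tau (t :: 'i \<times> 'i \<Rightarrow> 'k::ab_semigroup_add)"
  by (rule tensor2_eqI) (simp add: add.commute)

lemma tau_tens2: "tau (tens2 u v) = tens2 v (u :: _ \<Rightarrow> _::field)"
  by (rule tensor2_eqI) (simp add: mult.commute)

lemma tens2_zero [simp]:
  "tens2 0 v = (0 :: 'i \<times> 'i \<Rightarrow> 'k::field)" "tens2 u 0 = (0 :: 'i \<times> 'i \<Rightarrow> 'k::field)"
  by (rule tensor2_eqI, simp)+

lemma tens3_zero [simp]:
  "tens3 0 v w = (0 :: 'i \<times> 'i \<times> 'i \<Rightarrow> 'k::field)"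
  "tens3 u 0 w = (0 :: 'i \<times> 'i \<times> 'i \<Rightarrow> 'k::field)"
  "tens3 u v 0 = (0 :: 'i \<times> 'i \<times> 'i \<Rightarrow> 'k::field)"
  by (rule tensor3_eqI, simp)+

lemma linear_mapI:
  "(\<And>x y. f (x + y) = f x + f y) \<Longrightarrow> (\<And>c x. f (smul c x) = smul c (f x)) \<Longrightarrow> linear_map f"
  unfolding linear_map_def by blast

lemma linear_map_add: "linear_map f \<Longrightarrow> f (x + y) = f x + f y"
  unfolding linear_map_def by blast

lemma linear_map_smul: "linear_map f \<Longrightarrow> f (smul c x) = smul c (f x)"
  unfolding linear_map_def by blast

lemma linear_map_zero:
  assumes "linear_map (f :: ('i \<Rightarrow> 'k::field) \<Rightarrow> ('j \<Rightarrow> 'k))"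
  shows "f 0 = 0"
  using linear_map_smul[OF assms, of 0 0] by simp

lemma linear_map_diff:
  assumes "linear_map (f :: ('i \<Rightarrow> 'k::field) \<Rightarrow> ('j \<Rightarrow> 'k))"
  shows "f (x - y) = f x - f y"
  using linear_map_add[OF assms, of "x - y" y] by (simp add: eq_diff_eq)

lemma linear_map_sum:
  "linear_map (f :: ('i \<Rightarrow> 'k::field) \<Rightarrow> ('j \<Rightarrow> 'k)) \<Longrightarrow> f (sum g A) = (\<Sum>a\<in>A. f (g a))"
  by (induction A rule: infinite_finite_induct) (auto simp: linear_map_zero linear_map_add)

lemma linear_map_id: "linear_map (\<lambda>x. x)" "linear_map id"
  by (auto intro: linear_mapI)

lemma linear_map_compose:
  assumes f: "linear_map f" and g: "linear_map g"
  shows "linear_map (\<lambda>x. f (g x))"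
  by (rule linear_mapI) (simp_all add: linear_map_add[OF f] linear_map_smul[OF f]
      linear_map_add[OF g] linear_map_smul[OF g])

lemma linear_map_plus:
  assumes f: "linear_map f" and g: "linear_map g"
  shows "linear_map (\<lambda>x. f x + g x)"
  by (rule linear_mapI) (simp_all add: linear_map_add[OF f] linear_map_smul[OF f]
      linear_map_add[OF g] linear_map_smul[OF g] smul_add add_ac)

lemma linear_map_minus:
  assumes f: "linear_map (f :: ('i \<Rightarrow> 'k::field) \<Rightarrow> ('j \<Rightarrow> 'k))" and g: "linear_map g"
  shows "linear_map (\<lambda>x. f x - g x)"
  by (rule linear_mapI) (simp_all add: linear_map_add[OF f] linear_map_smul[OF f]
      linear_map_add[OF g] linear_map_smul[OF g] smul_diff algebra_simps)

lemma basis_expansion: "(u :: 'i::finite \<Rightarrow> 'k::field) = (\<Sum>c\<in>UNIV. smul (u c) (ev c))"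
proof (rule ext)
  fix j
  have "(\<Sum>c\<in>UNIV. smul (u c) (ev c)) j = (\<Sum>c\<in>UNIV. if j = c then u c else 0)"
    by (simp add: sum_fun_apply ev_def if_distrib cong: if_cong)
  then show "u j = (\<Sum>c\<in>UNIV. smul (u c) (ev c)) j"
    by simp
qed

lemma linear_map_basis_expansion:
  assumes "linear_map f"
  shows "f (u :: 'i::finite \<Rightarrow> 'k::field) = (\<Sum>c\<in>UNIV. smul (u c) (f (ev c)))"
  by (subst basis_expansion) (simp only: linear_map_sum[OF assms] linear_map_smul[OF assms])

definition bilinear_map :: "(('i \<Rightarrow> 'k::field) \<Rightarrow> ('i \<Rightarrow> 'k) \<Rightarrow> ('j \<Rightarrow> 'k)) \<Rightarrow> bool" where
  "bilinear_map H \<longleftrightarrow> (\<forall>x. linear_map (H x)) \<and> (\<forall>y. linear_map (\<lambda>x. H x y))"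

definition trilinear_map :: "(('i \<Rightarrow> 'k::field) \<Rightarrow> ('i \<Rightarrow> 'k) \<Rightarrow> ('i \<Rightarrow> 'k) \<Rightarrow> ('j \<Rightarrow> 'k)) \<Rightarrow> bool" where
  "trilinear_map H \<longleftrightarrow> (\<forall>x y. linear_map (H x y)) \<and> (\<forall>x z. linear_map (\<lambda>y. H x y z))
     \<and> (\<forall>y z. linear_map (\<lambda>x. H x y z))"

lemma linear_map_tens2:
  "linear_map (\<lambda>u. tens2 u (v :: 'i \<Rightarrow> 'k::field))"
  "linear_map (\<lambda>v. tens2 (u :: 'i \<Rightarrow> 'k::field) v)"
  by (rule linear_mapI; rule tensor2_eqI; simp add: algebra_simps)+

lemma linear_map_tens21:
  "linear_map (\<lambda>T. tens21 T (v :: 'i \<Rightarrow> 'k::field))"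
  "linear_map (\<lambda>v. tens21 (T :: 'i \<times> 'i \<Rightarrow> 'k::field) v)"
  by (rule linear_mapI; rule tensor3_eqI; simp add: algebra_simps)+

lemma linear_map_tens12:
  "linear_map (\<lambda>T. tens12 (u :: 'i \<Rightarrow> 'k::field) T)"
  "linear_map (\<lambda>u. tens12 u (T :: 'i \<times> 'i \<Rightarrow> 'k::field))"
  by (rule linear_mapI; rule tensor3_eqI; simp add: algebra_simps)+

lemma linear_map_tau: "linear_map (tau :: ('i \<times> 'i \<Rightarrow> 'k::field) \<Rightarrow> _)"
  by (rule linear_mapI; rule tensor2_eqI; simp)

lemma linear_map_tau12: "linear_map (tau12 :: ('i \<times> 'i \<times> 'i \<Rightarrow> 'k::field) \<Rightarrow> _)"
  by (rule linear_mapI; rule tensor3_eqI; simp)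

lemma tens2_linear_compose:
  "linear_map f \<Longrightarrow> linear_map (\<lambda>x. tens2 (f x) (v :: 'i \<Rightarrow> 'k::field))"
  "linear_map f \<Longrightarrow> linear_map (\<lambda>x. tens2 (u :: 'i \<Rightarrow> 'k::field) (f x))"
  by (rule linear_map_compose[OF linear_map_tens2(1)] linear_map_compose[OF linear_map_tens2(2)];
      assumption)+

lemma bilinear_map_tens2:
  assumes f: "linear_map f" and g: "linear_map g"
  shows "bilinear_map (\<lambda>u v. tens2 (f u) (g v))" "bilinear_map (\<lambda>u v. tens2 (g v) (f u))"
  unfolding bilinear_map_def
  by (intro conjI allI linear_mapI; rule tensor2_eqI;
      simp add: linear_map_add[OF f] linear_map_smul[OF f] linear_map_add[OF g]
        linear_map_smul[OF g] algebra_simps)+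

lemma bilinear_map_tens3:
  assumes f: "linear_map f" and g: "linear_map g"
  shows "bilinear_map (\<lambda>u v. tens3 (f u) (g v) z)" "bilinear_map (\<lambda>u v. tens3 (g v) (f u) z)"
    "bilinear_map (\<lambda>u v. tens3 (f u) z (g v))" "bilinear_map (\<lambda>u v. tens3 (g v) z (f u))"
    "bilinear_map (\<lambda>u v. tens3 z (f u) (g v))" "bilinear_map (\<lambda>u v. tens3 z (g v) (f u))"
  unfolding bilinear_map_def
  by (intro conjI allI linear_mapI; rule tensor3_eqI;
      simp add: linear_map_add[OF f] linear_map_smul[OF f] linear_map_add[OF g]
        linear_map_smul[OF g] algebra_simps)+

lemma trilinear_map_tens3:
  assumes f: "linear_map f" and g: "linear_map g" and h: "linear_map h"
  shows "trilinear_map (\<lambda>u v w. tens3 (f u) (g v) (h w))" "trilinear_map (\<lambda>u v w. tens3 (f u) (h w) (g v))"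
    "trilinear_map (\<lambda>u v w. tens3 (g v) (f u) (h w))" "trilinear_map (\<lambda>u v w. tens3 (g v) (h w) (f u))"
    "trilinear_map (\<lambda>u v w. tens3 (h w) (f u) (g v))" "trilinear_map (\<lambda>u v w. tens3 (h w) (g v) (f u))"
  unfolding trilinear_map_def
  by (intro conjI allI linear_mapI; rule tensor3_eqI;
      simp add: linear_map_add[OF f] linear_map_smul[OF f] linear_map_add[OF g] linear_map_smul[OF g]
        linear_map_add[OF h] linear_map_smul[OF h] algebra_simps)+

section \<open>Contracting tensors against multilinear maps\<close>

definition contract :: "('i::finite \<times> 'i \<Rightarrow> 'k::field) \<Rightarrow> (('i \<Rightarrow> 'k) \<Rightarrow> ('i \<Rightarrow> 'k) \<Rightarrow> ('j \<Rightarrow> 'k))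
    \<Rightarrow> ('j \<Rightarrow> 'k)" where
  "contract t \<Phi> = (\<Sum>p\<in>UNIV. smul (t p) (\<Phi> (ev (fst p)) (ev (snd p))))"

definition contract3 :: "('i::finite \<times> 'i \<times> 'i \<Rightarrow> 'k::field)
    \<Rightarrow> (('i \<Rightarrow> 'k) \<Rightarrow> ('i \<Rightarrow> 'k) \<Rightarrow> ('i \<Rightarrow> 'k) \<Rightarrow> ('j \<Rightarrow> 'k)) \<Rightarrow> ('j \<Rightarrow> 'k)" where
  "contract3 T H = (\<Sum>p\<in>UNIV. smul (T p) (H (ev (fst p)) (ev (fst (snd p))) (ev (snd (snd p)))))"

lemma contract_cong: "(\<And>a b. \<Phi> a b = \<Psi> a b) \<Longrightarrow> contract t \<Phi> = contract t \<Psi>"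
  by (simp add: contract_def)

lemma contract_add: "contract t (\<lambda>a b. \<Phi> a b + \<Psi> a b) = contract t \<Phi> + contract t \<Psi>"
  by (simp add: contract_def smul_add sum.distrib)

lemma contract_diff: "contract t (\<lambda>a b. \<Phi> a b - \<Psi> a b) = contract t \<Phi> - contract t \<Psi>"
  by (simp add: contract_def smul_diff sum_subtractf)

lemma contract_smul: "contract t (\<lambda>a b. smul c (\<Phi> a b)) = smul c (contract t \<Phi>)"
  by (simp add: contract_def smul_sum smul_smul mult.commute)

lemma contract_zero: "contract t (\<lambda>a b. 0) = 0"
  by (simp add: contract_def)

lemma contract_uminus: "contract t (\<lambda>a b. - \<Phi> a b) = - contract t \<Phi>"
  using contract_add[of t "\<lambda>a b. - \<Phi> a b" \<Phi>] by (simp add: contract_zero eq_neg_iff_add_eq_0)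

lemma contract_add_tensor: "contract (s + t) \<Phi> = contract s \<Phi> + contract t \<Phi>"
  by (simp add: contract_def smul_add_scalar sum.distrib)

lemma contract_tau: "contract (tau t) \<Phi> = contract t (\<lambda>a b. \<Phi> b a)"
proof -
  have "contract (tau t) \<Phi> = (\<Sum>p\<in>prod.swap ` UNIV. smul (t (snd p, fst p)) (\<Phi> (ev (fst p)) (ev (snd p))))"
    by (simp add: contract_def tau_def case_prod_beta)
  also have "\<dots> = contract t (\<lambda>a b. \<Phi> b a)"
    by (subst sum.reindex) (auto simp: contract_def)
  finally show ?thesis .
qed

lemma contract_commute:
  "contract s (\<lambda>a b. contract t (\<lambda>c d. Z a b c d)) = contract t (\<lambda>c d. contract s (\<lambda>a b. Z a b c d))"
  unfolding contract_def by (simp add: smul_sum smul_smul) (subst sum.swap, simp add: mult.commute)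

lemma linear_map_contract:
  assumes "linear_map f"
  shows "f (contract t \<Phi>) = contract t (\<lambda>a b. f (\<Phi> a b))"
  unfolding contract_def by (simp only: linear_map_sum[OF assms] linear_map_smul[OF assms])

lemma linear_map_contract_tensor: "linear_map (\<lambda>t. contract t \<Phi>)"
  by (rule linear_mapI) (simp_all add: contract_def smul_add_scalar sum.distrib smul_sum smul_smul)

lemma linear_map_contract_fun:
  assumes "\<And>a b. linear_map (\<lambda>x. \<Phi> x a b)"
  shows "linear_map (\<lambda>x. contract t (\<Phi> x))"
proof (rule linear_mapI)
  fix x y
  have "contract t (\<Phi> (x + y)) = contract t (\<lambda>a b. \<Phi> x a b + \<Phi> y a b)"
    by (rule contract_cong) (rule linear_map_add[OF assms])
  then show "contract t (\<Phi> (x + y)) = contract t (\<Phi> x) + contract t (\<Phi> y)"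
    by (simp only: contract_add)
next
  fix c x
  have "contract t (\<Phi> (smul c x)) = contract t (\<lambda>a b. smul c (\<Phi> x a b))"
    by (rule contract_cong) (rule linear_map_smul[OF assms])
  then show "contract t (\<Phi> (smul c x)) = smul c (contract t (\<Phi> x))"
    by (simp only: contract_smul)
qed

lemma contract_tens2:
  assumes "bilinear_map H"
  shows "contract (tens2 u v) H = H u v"
proof -
  have left: "linear_map (\<lambda>x. H x y)" and right: "linear_map (H x)" for x y
    using assms by (simp_all add: bilinear_map_def)
  have "H u v = (\<Sum>c\<in>UNIV. smul (u c) (H (ev c) v))"
    using linear_map_basis_expansion[OF left, where u=u] by simp
  also have "\<dots> = (\<Sum>c\<in>UNIV. smul (u c) (\<Sum>d\<in>UNIV. smul (v d) (H (ev c) (ev d))))"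
    by (simp only: linear_map_basis_expansion[OF right, where u=v])
  also have "\<dots> = contract (tens2 u v) H"
    by (simp add: contract_def tens2_def smul_sum smul_smul sum.cartesian_product case_prod_beta)
  finally show ?thesis by simp
qed

lemma contract3_tens3:
  assumes "trilinear_map H"
  shows "contract3 (tens3 u v w) H = H u v w"
proof -
  have l1: "linear_map (\<lambda>x. H x y z)" and l2: "linear_map (\<lambda>y. H x y z)" and l3: "linear_map (H x y)"
    for x y z using assms by (simp_all add: trilinear_map_def)
  have "H u v w = (\<Sum>a\<in>UNIV. smul (u a) (H (ev a) v w))"
    using linear_map_basis_expansion[OF l1, where u=u] by simp
  also have "\<dots> = (\<Sum>a\<in>UNIV. smul (u a) (\<Sum>b\<in>UNIV. smul (v b) (H (ev a) (ev b) w)))"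
    by (simp only: linear_map_basis_expansion[OF l2, where u=v])
  also have "\<dots> = (\<Sum>a\<in>UNIV. smul (u a) (\<Sum>b\<in>UNIV. smul (v b)
      (\<Sum>c\<in>UNIV. smul (w c) (H (ev a) (ev b) (ev c)))))"
    by (simp only: linear_map_basis_expansion[OF l3, where u=w])
  also have "\<dots> = contract3 (tens3 u v w) H"
    by (simp add: contract3_def tens3_def smul_sum smul_smul mult.assoc sum.cartesian_product case_prod_beta)
  finally show ?thesis by simp
qed

lemma linear_map_contract3_tensor: "linear_map (\<lambda>T. contract3 T H)"
  by (rule linear_mapI) (simp_all add: contract3_def smul_add_scalar sum.distrib smul_sum smul_smul)

lemma contract_contract: "contract r (\<lambda>a b. contract (X a b) H) = contract (contract r X) H"
  by (rule linear_map_contract[OF linear_map_contract_tensor, symmetric])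

lemma contract_contract3: "contract r (\<lambda>a b. contract3 (X a b) H) = contract3 (contract r X) H"
  by (rule linear_map_contract[OF linear_map_contract3_tensor, symmetric])

lemma map2_eq_contract: "map2 f g t = contract t (\<lambda>a b. tens2 (f a) (g b))"
  by (simp add: map2_def contract_def sum.cartesian_product case_prod_beta)

lemma mapD_I_eq_contract: "mapD_I D t = contract t (\<lambda>a b. tens21 (D a) b)"
  by (simp add: mapD_I_def contract_def sum.cartesian_product case_prod_beta)

lemma mapI_D_eq_contract: "mapI_D D t = contract t (\<lambda>a b. tens12 a (D b))"
  by (simp add: mapI_D_def contract_def sum.cartesian_product case_prod_beta)

lemma linear_map_tensor_maps:
  "linear_map (map2 f g)" "linear_map (mapD_I D)" "linear_map (mapI_D D)"
  by (simp_all only: map2_eq_contract[abs_def] mapD_I_eq_contract[abs_def] mapI_D_eq_contract[abs_def]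
      linear_map_contract_tensor)

lemma map2_tens2: "linear_map f \<Longrightarrow> linear_map g \<Longrightarrow> map2 f g (tens2 u v) = tens2 (f u) (g v)"
  unfolding map2_eq_contract by (rule contract_tens2) (rule bilinear_map_tens2)

lemma mapD_I_tens2: "linear_map D \<Longrightarrow> mapD_I D (tens2 u v) = tens21 (D u) v"
  unfolding mapD_I_eq_contract
  by (rule contract_tens2)
    (simp add: bilinear_map_def linear_map_compose[OF linear_map_tens21(1)] linear_map_tens21(2))

lemma mapI_D_tens2: "linear_map D \<Longrightarrow> mapI_D D (tens2 u v) = tens12 u (D v)"
  unfolding mapI_D_eq_contract
  by (rule contract_tens2)
    (simp add: bilinear_map_def linear_map_compose[OF linear_map_tens12(1)] linear_map_tens12(2))

lemma tensor_maps_contract: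
  "map2 f g (contract t \<Phi>) = contract t (\<lambda>a b. map2 f g (\<Phi> a b))"
  "mapD_I D (contract t \<Phi>) = contract t (\<lambda>a b. mapD_I D (\<Phi> a b))"
  "mapI_D D (contract t \<Phi>) = contract t (\<lambda>a b. mapI_D D (\<Phi> a b))"
  "tau (contract t \<Phi>) = contract t (\<lambda>a b. tau (\<Phi> a b))"
  "tau12 (contract t \<Psi>) = contract t (\<lambda>a b. tau12 (\<Psi> a b))"
  "tens21 (contract t \<Phi>) v = contract t (\<lambda>a b. tens21 (\<Phi> a b) v)"
  "tens12 u (contract t \<Phi>) = contract t (\<lambda>a b. tens12 u (\<Phi> a b))"
  by (rule linear_map_contract, rule linear_map_tensor_maps linear_map_tau linear_map_tau12
      linear_map_tens21 linear_map_tens12)+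

lemma tensor_maps_add:
  "map2 f g (X + Y) = map2 f g X + map2 f g Y"
  "mapD_I D (X + Y) = mapD_I D X + mapD_I D Y"
  "mapI_D D (X + Y) = mapI_D D X + mapI_D D Y"
  "tau (X + Y) = tau X + tau Y"
  by (rule linear_map_add, rule linear_map_tensor_maps linear_map_tau)+

lemma tensor_maps_diff:
  "map2 f g (X - Y) = map2 f g X - map2 f g Y"
  "mapD_I D (X - Y) = mapD_I D X - mapD_I D Y"
  "mapI_D D (X - Y) = mapI_D D X - mapI_D D Y"
  "tau (X - Y) = tau X - tau Y"
  by (rule linear_map_diff, rule linear_map_tensor_maps linear_map_tau)+

lemma tensor3_maps_add_diff:
  fixes X Y :: "'i \<times> 'i \<Rightarrow> 'k::field" and X' Y' :: "'i \<times> 'i \<times> 'i \<Rightarrow> 'k"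
  shows "tau12 (X' + Y') = tau12 X' + tau12 Y'" "tau12 (X' - Y') = tau12 X' - tau12 Y'"
    "tens21 (X + Y) v = tens21 X v + tens21 Y v" "tens21 (X - Y) v = tens21 X v - tens21 Y v"
    "tens12 u (X + Y) = tens12 u X + tens12 u Y" "tens12 u (X - Y) = tens12 u X - tens12 u Y"
  by (rule tensor3_eqI; simp add: algebra_simps)+

definition swap_diff :: "(('i \<Rightarrow> 'k) \<Rightarrow> ('i \<Rightarrow> 'k) \<Rightarrow> ('i \<Rightarrow> 'k) \<Rightarrow> ('i \<Rightarrow> 'k) \<Rightarrow> ('j \<Rightarrow> 'k::field))
    \<Rightarrow> ('i \<Rightarrow> 'k) \<Rightarrow> ('i \<Rightarrow> 'k) \<Rightarrow> ('i \<Rightarrow> 'k) \<Rightarrow> ('i \<Rightarrow> 'k) \<Rightarrow> ('j \<Rightarrow> 'k)" where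
  "swap_diff K a b c d = K a b c d - K c d a b"

lemma contract2_swap_diff: "contract r (\<lambda>a b. contract r (\<lambda>c d. swap_diff K a b c d)) = 0"
  unfolding swap_diff_def contract_diff by (subst contract_commute) (rule diff_self)

section \<open>Leibniz-dendriform operations\<close>

locale LD_bilinear =
  fixes sc pr :: "('i::finite \<Rightarrow> 'k::field) \<Rightarrow> ('i \<Rightarrow> 'k) \<Rightarrow> ('i \<Rightarrow> 'k)"
  assumes bilinear_sc: "bilinear_op sc" and bilinear_pr: "bilinear_op pr"
begin

abbreviation "ci \<equiv> circ_op sc pr"
abbreviation "od \<equiv> odot_op sc pr"
abbreviation "st \<equiv> star_op sc pr"

lemma linear_sc: "linear_map (\<lambda>x. sc x z)" "linear_map (sc x)"
  using bilinear_sc unfolding bilinear_op_def linear_map_def by blast+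

lemma linear_pr: "linear_map (\<lambda>x. pr x z)" "linear_map (pr x)"
  using bilinear_pr unfolding bilinear_op_def linear_map_def by blast+

lemma linear_ci: "linear_map (\<lambda>w. ci w a)" "linear_map (\<lambda>w. ci a w)"
  unfolding circ_op_def by (intro linear_map_plus linear_sc linear_pr)+

lemma linear_od: "linear_map (\<lambda>w. od w a)" "linear_map (\<lambda>w. od a w)"
  unfolding odot_op_def by (intro linear_map_plus linear_sc linear_pr)+

lemma linear_st: "linear_map (\<lambda>w. st w a)" "linear_map (\<lambda>w. st a w)"
  unfolding star_op_def by (intro linear_map_plus linear_ci)+

lemma linear_Lm_Rm:
  "linear_map (Lm sc x)" "linear_map (Lm pr x)" "linear_map (Lm ci x)" "linear_map (Lm od x)"
  "linear_map (Lm st x)" "linear_map (Rm sc x)" "linear_map (Rm pr x)" "linear_map (Rm ci x)"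
  "linear_map (Rm od x)" "linear_map (Rm st x)"
  unfolding Lm_def Rm_def using linear_sc linear_pr linear_ci linear_od linear_st by auto

lemmas linear_ops = linear_sc linear_pr linear_ci linear_od linear_st linear_Lm_Rm

lemma sc_pr_add_diff:
  "sc (x + y) z = sc x z + sc y z" "sc z (x + y) = sc z x + sc z y"
  "sc (x - y) z = sc x z - sc y z" "sc z (x - y) = sc z x - sc z y"
  "pr (x + y) z = pr x z + pr y z" "pr z (x + y) = pr z x + pr z y"
  "pr (x - y) z = pr x z - pr y z" "pr z (x - y) = pr z x - pr z y"
  using linear_map_add[OF linear_sc(1)] linear_map_add[OF linear_sc(2)]
    linear_map_diff[OF linear_sc(1)] linear_map_diff[OF linear_sc(2)]
    linear_map_add[OF linear_pr(1)] linear_map_add[OF linear_pr(2)]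
    linear_map_diff[OF linear_pr(1)] linear_map_diff[OF linear_pr(2)]
  by simp_all

definition cob_succ :: "('i \<Rightarrow> 'k) \<Rightarrow> ('i \<Rightarrow> 'k) \<Rightarrow> ('i \<Rightarrow> 'k) \<Rightarrow> ('i \<times> 'i \<Rightarrow> 'k)" where
  "cob_succ x a b = tens2 (od x a) b - tens2 a (ci b x)"

definition cob_prec :: "('i \<Rightarrow> 'k) \<Rightarrow> ('i \<Rightarrow> 'k) \<Rightarrow> ('i \<Rightarrow> 'k) \<Rightarrow> ('i \<times> 'i \<Rightarrow> 'k)" where
  "cob_prec x a b = tens2 a (pr b x) - tens2 (st x a) b"

lemma linear_cob: "linear_map (\<lambda>x. cob_succ x a b)" "linear_map (\<lambda>x. cob_prec x a b)"
  unfolding cob_succ_def cob_prec_def by (intro linear_map_minus tens2_linear_compose linear_ops)+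

definition yb_term :: "(('i \<Rightarrow> 'k) \<Rightarrow> ('i \<Rightarrow> 'k) \<Rightarrow> ('i \<Rightarrow> 'k) \<Rightarrow> ('j \<Rightarrow> 'k))
    \<Rightarrow> ('i \<Rightarrow> 'k) \<Rightarrow> ('i \<Rightarrow> 'k) \<Rightarrow> ('i \<Rightarrow> 'k) \<Rightarrow> ('i \<Rightarrow> 'k) \<Rightarrow> ('j \<Rightarrow> 'k)" where
  "yb_term H a b c d = H a c (ci d b) - H a (od b c) d - H (sc a c) b d"

definition inv_succ_term :: "(('i \<Rightarrow> 'k) \<Rightarrow> ('i \<Rightarrow> 'k) \<Rightarrow> ('j \<Rightarrow> 'k))
    \<Rightarrow> ('i \<Rightarrow> 'k) \<Rightarrow> ('i \<Rightarrow> 'k) \<Rightarrow> ('i \<Rightarrow> 'k) \<Rightarrow> ('j \<Rightarrow> 'k)" where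
  "inv_succ_term H u a b = H (od u a) b - H a (ci b u) + (H (od u b) a - H b (ci a u))"

definition inv_prec_term :: "(('i \<Rightarrow> 'k) \<Rightarrow> ('i \<Rightarrow> 'k) \<Rightarrow> ('j \<Rightarrow> 'k))
    \<Rightarrow> ('i \<Rightarrow> 'k) \<Rightarrow> ('i \<Rightarrow> 'k) \<Rightarrow> ('i \<Rightarrow> 'k) \<Rightarrow> ('j \<Rightarrow> 'k)" where
  "inv_prec_term H u a b = H (st u a) b - H a (pr b u) + (H (st u b) a - H b (pr a u))"

lemma yb_term_eq_contract3:
  "trilinear_map H \<Longrightarrow> yb_term H a b c d = contract3 (yb_term tens3 a b c d) H"
  by (simp only: yb_term_def linear_map_diff[OF linear_map_contract3_tensor] contract3_tens3)

lemma inv_term_eq_contract: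
  "bilinear_map H \<Longrightarrow> inv_succ_term H u a b = contract (inv_succ_term tens2 u a b) H"
  "bilinear_map H \<Longrightarrow> inv_prec_term H u a b = contract (inv_prec_term tens2 u a b) H"
  by (simp_all only: inv_succ_term_def inv_prec_term_def linear_map_add[OF linear_map_contract_tensor]
      linear_map_diff[OF linear_map_contract_tensor] contract_tens2)

definition ld_defect1 :: "('i \<Rightarrow> 'k) \<Rightarrow> ('i \<Rightarrow> 'k) \<Rightarrow> ('i \<Rightarrow> 'k) \<Rightarrow> ('i \<Rightarrow> 'k)" where
  "ld_defect1 u v w = sc (ci u v) w - (sc u (sc v w) - sc v (sc u w))"

definition ld_defect2 :: "('i \<Rightarrow> 'k) \<Rightarrow> ('i \<Rightarrow> 'k) \<Rightarrow> ('i \<Rightarrow> 'k) \<Rightarrow> ('i \<Rightarrow> 'k)" where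
  "ld_defect2 u v w = pr v (ci u w) + pr (sc u v) w - sc u (pr v w)"

definition ld_defect3 :: "('i \<Rightarrow> 'k) \<Rightarrow> ('i \<Rightarrow> 'k) \<Rightarrow> ('i \<Rightarrow> 'k) \<Rightarrow> ('i \<Rightarrow> 'k)" where
  "ld_defect3 u v w = pr u (ci v w) - (pr (pr u v) w + sc v (pr u w))"

lemma ld_defects_zero_iff:
  "LD_algebra sc pr \<longleftrightarrow> (\<forall>u v w. ld_defect1 u v w = 0 \<and> ld_defect2 u v w = 0 \<and> ld_defect3 u v w = 0)"
  using bilinear_sc bilinear_pr
  by (auto simp: LD_algebra_def ld_defect1_def ld_defect2_def ld_defect3_def)

lemmas expand_simps = sc_pr_add_diff circ_op_def odot_op_def star_op_def cob_succ_def cob_prec_def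
  yb_term_def inv_succ_term_def inv_prec_term_def ld_defect1_def ld_defect2_def ld_defect3_def
  tens2_apply tens3_apply tens21_apply tens12_apply tau_apply tau12_apply plus_fun_apply minus_apply
  smul_apply Lm_def Rm_def swap_diff_def

end

section \<open>Quasi-triangular structures\<close>

locale LD_quasitriangular =
  fixes sc pr :: "('i::finite \<Rightarrow> 'k::field) \<Rightarrow> ('i \<Rightarrow> 'k) \<Rightarrow> ('i \<Rightarrow> 'k)"
    and r :: "'i \<times> 'i \<Rightarrow> 'k"
  assumes LD_algebra: "LD_algebra sc pr"
    and YBE: "S_YB sc pr r = 0"
    and invariant: "invariant sc pr (r + tau r)"

sublocale LD_quasitriangular \<subseteq> LD_bilinear
  using LD_algebra by unfold_locales (simp_all add: LD_algebra_def)

context LD_quasitriangular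
begin

lemma ld_defects_zero: "ld_defect1 u v w = 0" "ld_defect2 u v w = 0" "ld_defect3 u v w = 0"
  using LD_algebra ld_defects_zero_iff by blast+

definition Ds :: "('i \<Rightarrow> 'k) \<Rightarrow> ('i \<times> 'i \<Rightarrow> 'k)" where
  "Ds x = contract r (cob_succ x)"

definition Dp :: "('i \<Rightarrow> 'k) \<Rightarrow> ('i \<times> 'i \<Rightarrow> 'k)" where
  "Dp x = contract r (cob_prec x)"

lemma linear_Ds_Dp: "linear_map Ds" "linear_map Dp"
  unfolding Ds_def[abs_def] Dp_def[abs_def] by (intro linear_map_contract_fun linear_cob)+

lemma Delta_succ_eq: "Delta_succ sc pr r = Ds"
proof
  fix x
  show "Delta_succ sc pr r x = Ds x"
    unfolding Delta_succ_def Ds_def map2_eq_contract contract_diff[symmetric]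
    by (rule contract_cong) (simp add: cob_succ_def Lm_def Rm_def)
qed

lemma contract_invariance:
  "contract (r + tau r) (\<lambda>a b. tens2 (od u a) b - tens2 a (ci b u)) = 0"
  "contract (r + tau r) (\<lambda>a b. tens2 (st u a) b - tens2 a (pr b u)) = 0"
  using invariant by (simp_all add: invariant_def tau_add_tau map2_eq_contract Lm_def Rm_def
      contract_diff[symmetric])

lemma invariance_succ: "contract r (inv_succ_term tens2 u) = 0"
  using contract_invariance(1)
  unfolding contract_add_tensor contract_tau contract_add[symmetric] inv_succ_term_def[abs_def] .

lemma invariance_prec: "contract r (inv_prec_term tens2 u) = 0"
  using contract_invariance(2)
  unfolding contract_add_tensor contract_tau contract_add[symmetric] inv_prec_term_def[abs_def] .

lemma Delta_prec_eq: "Delta_prec sc pr r = Dp"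
proof
  fix x
  let ?F = "\<lambda>a b. tens2 (st x a) b - tens2 a (pr b x)"
  have swap: "contract (tau r) ?F = - contract r ?F"
    using contract_invariance(2)[of x]
    by (simp add: contract_add_tensor eq_neg_iff_add_eq_0 add.commute)
  have "Delta_prec sc pr r x = contract (tau r) ?F"
    unfolding Delta_prec_def map2_eq_contract contract_diff[symmetric]
    by (rule contract_cong) (simp add: Lm_def Rm_def)
  also have "\<dots> = contract r (\<lambda>a b. - ?F a b)"
    by (simp only: swap contract_uminus)
  also have "\<dots> = Dp x"
    unfolding Dp_def by (rule contract_cong) (simp add: cob_prec_def)
  finally show "Delta_prec sc pr r x = Dp x" .
qed

lemma contract_inv_terms:
  assumes "bilinear_map H"
  shows "contract r (\<lambda>a b. inv_succ_term H u a b) = 0" "contract r (\<lambda>a b. inv_prec_term H u a b) = 0"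
  by (simp_all only: inv_term_eq_contract[OF assms] contract_contract invariance_succ invariance_prec
      linear_map_zero[OF linear_map_contract_tensor])

lemma contract2_inv_terms:
  assumes "\<And>c d. bilinear_map (H c d)"
  shows "contract r (\<lambda>a b. contract r (\<lambda>c d. inv_succ_term (H c d) (u c d) a b)) = 0"
    "contract r (\<lambda>a b. contract r (\<lambda>c d. inv_prec_term (H c d) (u c d) a b)) = 0"
  by (subst contract_commute, simp only: contract_inv_terms[OF assms] contract_zero)+

lemma S_YB_eq_contract: "S_YB sc pr r = contract r (\<lambda>a b. contract r (\<lambda>c d. yb_term tens3 a b c d))"
  unfolding S_YB_def contract_def yb_term_def by (simp only: smul_sum smul_smul)

lemma contract2_yb_term:
  assumes "trilinear_map H"
  shows "contract r (\<lambda>a b. contract r (\<lambda>c d. yb_term H a b c d)) = 0"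
  by (simp only: yb_term_eq_contract3[OF assms] contract_contract3 S_YB_eq_contract[symmetric] YBE
      linear_map_zero[OF linear_map_contract3_tensor])

section \<open>The bialgebra axioms\<close>

lemmas push_simps = tau_tens2 tensor_maps_contract tensor_maps_add tensor_maps_diff tensor3_maps_add_diff
  map2_tens2 mapD_I_tens2 mapI_D_tens2 contract_add[symmetric] contract_diff[symmetric]
  linear_map_contract_fun linear_map_plus linear_map_minus tens2_linear_compose linear_map_id
  Ds_def Dp_def cob_succ_def cob_prec_def linear_ops linear_Ds_Dp

lemmas vanishing_simps = contract_add contract_diff contract_uminus contract_zero
  contract2_swap_diff contract2_yb_term contract_inv_terms contract2_inv_terms
  trilinear_map_tens3 bilinear_map_tens3 bilinear_map_tens2 linear_ops linear_map_id
  ld_defects_zero tens2_zero tens3_zero add_0_left add_0_right diff_0_right diff_self minus_zero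

definition residue1 :: "('i \<Rightarrow> 'k) \<Rightarrow> ('i \<Rightarrow> 'k) \<Rightarrow> ('i \<Rightarrow> 'k) \<Rightarrow> ('i \<Rightarrow> 'k) \<Rightarrow> ('i \<Rightarrow> 'k)
    \<Rightarrow> ('i \<times> 'i \<times> 'i \<Rightarrow> 'k)" where
  "residue1 x a b c d =
    - tens3 a c (pr b (pr d x)) - tens3 a c (pr b (sc d x)) + tens3 a c (pr (pr b d) x)
    + tens3 a c (pr (sc b d) x) - tens3 a c (sc b (pr d x)) - tens3 a c (sc b (sc d x))
    + tens3 a c (sc (pr b d) x) + tens3 a c (sc (sc b d) x) + tens3 a (pr c (pr b x)) d
    + tens3 a (pr c (sc b x)) d + tens3 a (pr (sc b c) x) d - tens3 a (sc b c) (pr d x)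
    - tens3 a (sc b c) (sc d x) + tens3 a (sc x (sc b c)) d + tens3 a (sc (pr b x) c) d
    + tens3 a (sc (sc b x) c) d + tens3 (pr a c) d (pr b x) + tens3 (pr a c) d (sc b x)
    - tens3 (pr (pr a x) c) d b - tens3 (pr (sc x a) c) d b - tens3 (sc a c) b (pr d x)
    - tens3 (sc a c) b (sc d x) + tens3 (sc a (pr c x)) b d + tens3 (sc a (sc x c)) b d"

lemma Delta_coalgebra1:
  "mapD_I (\<lambda>x. Ds x + Dp x) (Ds x) = mapI_D Ds (Ds x) - tau12 (mapI_D Ds (Ds x))"
proof -
  have "mapD_I (\<lambda>x. Ds x + Dp x) (Ds x) - (mapI_D Ds (Ds x) - tau12 (mapI_D Ds (Ds x))) =
      contract r (\<lambda>a b. contract r (\<lambda>c d. yb_term (\<lambda>u v w. tens3 (sc x u) v w) a b c d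
      + yb_term (\<lambda>u v w. tens3 (pr u x) v w) a b c d
      - yb_term (\<lambda>u v w. tens3 v (sc x u) w) a b c d
      + yb_term (\<lambda>u v w. tens3 v u (pr w x)) a b c d
      - yb_term (\<lambda>u v w. tens3 v (pr u x) w) a b c d
      + yb_term (\<lambda>u v w. tens3 v u (sc w x)) a b c d
      + inv_succ_term (\<lambda>t1 t2. tens3 t1 (sc x t2) d) c a b
      - inv_prec_term (\<lambda>t1 t2. tens3 t1 (sc x t2) d) c a b
      + inv_succ_term (\<lambda>t1 t2. tens3 (sc t2 c) t1 d) x a b
      + inv_succ_term (\<lambda>t1 t2. tens3 (pr c t2) t1 d) x a b
      + inv_succ_term (\<lambda>t1 t2. tens3 t1 (pr t2 x) d) c a b
      - inv_prec_term (\<lambda>t1 t2. tens3 t1 (pr t2 x) d) c a b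
      - inv_succ_term (\<lambda>t1 t2. tens3 t1 t2 (pr d x)) c a b
      + inv_prec_term (\<lambda>t1 t2. tens3 t1 t2 (pr d x)) c a b
      - inv_succ_term (\<lambda>t1 t2. tens3 t1 t2 (sc d x)) c a b
      + inv_prec_term (\<lambda>t1 t2. tens3 t1 t2 (sc d x)) c a b + tens3 c (ld_defect1 d x a) b
      + tens3 c (ld_defect2 d a x) b + tens3 (ld_defect1 a x c) b d + tens3 (ld_defect2 a c x) b d
      - tens3 a c (ld_defect2 b d x) + tens3 a c (ld_defect3 b d x) - tens3 (ld_defect2 x c a) b d
      + tens3 (ld_defect3 c x a) b d - tens3 a c (ld_defect1 b d x)
      + swap_diff (residue1 x) a b c d))"
    by (simp only: push_simps, intro contract_cong tensor3_eqI,
        simp add: expand_simps residue1_def, algebra)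
  also have "\<dots> = 0"
    by (simp only: vanishing_simps)
  finally show ?thesis by (simp only: right_minus_eq)
qed

definition residue2 :: "('i \<Rightarrow> 'k) \<Rightarrow> ('i \<Rightarrow> 'k) \<Rightarrow> ('i \<Rightarrow> 'k) \<Rightarrow> ('i \<Rightarrow> 'k) \<Rightarrow> ('i \<Rightarrow> 'k)
    \<Rightarrow> ('i \<times> 'i \<times> 'i \<Rightarrow> 'k)" where
  "residue2 x a b c d =
    - tens3 a c (pr d (pr b x)) - tens3 a c (pr d (sc b x)) + tens3 a d (pr (sc b c) x)
    + tens3 a d (sc (pr b x) c) + tens3 a d (sc (pr x b) c) + tens3 a d (sc (sc b x) c)
    + tens3 a d (sc (sc x b) c) - tens3 a (pr b (pr d x)) c - tens3 a (pr b (pr x d)) c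
    - tens3 a (pr b (sc d x)) c - tens3 a (pr b (sc x d)) c + tens3 a (pr c (pr b x)) d
    + tens3 a (pr c (sc b x)) d - tens3 a (pr d x) (sc b c) + tens3 a (pr d (pr b x)) c
    + tens3 a (pr d (sc b x)) c - tens3 a (pr x d) (sc b c) + tens3 a (pr x (pr b d)) c
    + tens3 a (pr x (sc b d)) c + tens3 a (pr (pr b d) x) c + tens3 a (pr (pr b x) c) d
    + tens3 a (pr (pr b x) d) c + tens3 a (pr (sc b d) x) c + tens3 a (pr (sc b x) c) d
    + tens3 a (pr (sc b x) d) c - tens3 a (sc b (pr d x)) c - tens3 a (sc b (pr x d)) c
    - tens3 a (sc b (sc d x)) c - tens3 a (sc b (sc x d)) c + tens3 a (sc c (pr b x)) d
    + tens3 a (sc c (sc b x)) d - tens3 a (sc d x) (sc b c) + tens3 a (sc d (pr b x)) c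
    + tens3 a (sc d (sc b x)) c - tens3 a (sc x d) (sc b c) + tens3 a (sc x (pr b d)) c
    + tens3 a (sc x (sc b d)) c + tens3 a (sc (pr b d) x) c + tens3 a (sc (pr b x) c) d
    + tens3 a (sc (pr b x) d) c + tens3 a (sc (sc b d) x) c + tens3 a (sc (sc b x) c) d
    + tens3 a (sc (sc b x) d) c + tens3 (pr a c) (pr b x) d + tens3 (pr a c) (pr x b) d
    + tens3 (pr a c) (sc b x) d + tens3 (pr a c) (sc x b) d + tens3 (pr a x) c (pr d b)
    + tens3 (pr a x) d (pr c b) - tens3 (pr a x) (pr b c) d - tens3 (pr a x) (pr c b) d
    - tens3 (pr a x) (pr d b) c - tens3 (pr a x) (sc b c) d - tens3 (pr a x) (sc c b) d
    - tens3 (pr a x) (sc d b) c - tens3 (pr a (pr c x)) b d - tens3 (pr a (pr x c)) b d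
    - tens3 (pr a (sc c x)) b d - tens3 (pr a (sc x c)) b d - tens3 (pr (pr a d) x) b c
    + tens3 (pr (sc a c) x) d b + tens3 (pr (sc b c) x) d a - tens3 (sc a c) (pr d x) b
    - tens3 (sc a c) (pr x d) b - tens3 (sc a c) (sc d x) b - tens3 (sc a c) (sc x d) b
    + tens3 (sc x a) c (pr d b) + tens3 (sc x a) d (pr c b) - tens3 (sc x a) (pr b c) d
    - tens3 (sc x a) (pr c b) d - tens3 (sc x a) (pr d b) c - tens3 (sc x a) (sc b c) d
    - tens3 (sc x a) (sc c b) d - tens3 (sc x a) (sc d b) c + tens3 (sc x (pr a c)) b d
    + tens3 (sc (pr a x) c) d b + tens3 (sc (pr x a) c) d b + tens3 (sc (sc a x) c) d b
    + tens3 (sc (sc x a) c) d b"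

lemma Delta_coalgebra2:
  "mapI_D Dp (Ds x) - mapD_I Ds (Dp x) = tau12 (mapI_D (\<lambda>x. Ds x + Dp x) (Dp x))"
proof -
  have "mapI_D Dp (Ds x) - mapD_I Ds (Dp x) - tau12 (mapI_D (\<lambda>x. Ds x + Dp x) (Dp x)) =
      contract r (\<lambda>a b. contract r (\<lambda>c d. yb_term (\<lambda>u v w. tens3 v (pr x w) u) a b c d
      + yb_term (\<lambda>u v w. tens3 v (pr w x) u) a b c d
      - yb_term (\<lambda>u v w. tens3 v w (pr u x)) a b c d
      + yb_term (\<lambda>u v w. tens3 v (sc x w) u) a b c d
      + yb_term (\<lambda>u v w. tens3 v (sc w x) u) a b c d
      + yb_term (\<lambda>u v w. tens3 (pr v x) w u) a b c d
      + yb_term (\<lambda>u v w. tens3 (pr u x) w v) a b c d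
      + yb_term (\<lambda>u v w. tens3 (sc x v) w u) a b c d
      + yb_term (\<lambda>u v w. tens3 (sc x u) w v) a b c d
      + inv_prec_term (\<lambda>t1 t2. tens3 c t1 t2) (sc d x) a b
      - inv_prec_term (\<lambda>t1 t2. tens3 (pr t2 c) t1 d) x a b
      + inv_succ_term (\<lambda>t1 t2. tens3 t1 d (pr t2 x)) c a b
      + inv_prec_term (\<lambda>t1 t2. tens3 c t1 t2) (pr d x) a b
      - inv_prec_term (\<lambda>t1 t2. tens3 c (pr d t1) t2) x a b
      - inv_prec_term (\<lambda>t1 t2. tens3 c t1 (sc d t2)) x a b
      - inv_succ_term (\<lambda>t1 t2. tens3 t1 (sc x d) t2) c a b
      + inv_prec_term (\<lambda>t1 t2. tens3 t1 (sc x d) t2) c a b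
      - inv_succ_term (\<lambda>t1 t2. tens3 t1 (sc d x) t2) c a b
      + inv_prec_term (\<lambda>t1 t2. tens3 t1 (sc d x) t2) c a b
      - inv_succ_term (\<lambda>t1 t2. tens3 t1 (pr d x) t2) c a b
      + inv_prec_term (\<lambda>t1 t2. tens3 t1 (pr d x) t2) c a b
      - inv_prec_term (\<lambda>t1 t2. tens3 t1 d (pr t2 x)) c a b
      - inv_succ_term (\<lambda>t1 t2. tens3 t1 (pr x d) t2) c a b
      + inv_prec_term (\<lambda>t1 t2. tens3 t1 (pr x d) t2) c a b
      - inv_prec_term (\<lambda>t1 t2. tens3 c (sc d t1) t2) x a b
      - inv_prec_term (\<lambda>t1 t2. tens3 (sc c t2) t1 d) x a b
      - inv_prec_term (\<lambda>t1 t2. tens3 (pr c x) t1 t2) d a b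
      - inv_prec_term (\<lambda>t1 t2. tens3 (sc x c) t1 t2) d a b
      - inv_prec_term (\<lambda>t1 t2. tens3 t2 d (sc t1 c)) x a b
      - inv_succ_term (\<lambda>t1 t2. tens3 (sc x t1) d t2) c a b
      + inv_prec_term (\<lambda>t1 t2. tens3 (sc x t1) d t2) c a b + tens3 (ld_defect1 x c a) b d
      + tens3 (ld_defect1 c x a) b d - tens3 a (ld_defect2 b x d) c - tens3 a (ld_defect1 b x d) c
      + tens3 a (ld_defect3 b x d) c - tens3 a (ld_defect2 b d x) c + tens3 a (ld_defect3 b d x) c
      + tens3 c b (ld_defect2 d a x) + tens3 (ld_defect3 a x c) b d + tens3 (ld_defect2 c a x) b d
      - tens3 a (ld_defect1 b d x) c + tens3 (ld_defect2 d a x) b c - tens3 (ld_defect3 a d x) b c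
      + tens3 b d (ld_defect1 x a c) + tens3 b d (ld_defect1 a x c) + tens3 c b (ld_defect1 x d a)
      + tens3 c b (ld_defect1 d x a) + swap_diff (residue2 x) a b c d))"
    by (simp only: push_simps, intro contract_cong tensor3_eqI,
        simp add: expand_simps residue2_def, algebra)
  also have "\<dots> = 0"
    by (simp only: vanishing_simps)
  finally show ?thesis by (simp only: right_minus_eq)
qed

definition residue3 :: "('i \<Rightarrow> 'k) \<Rightarrow> ('i \<Rightarrow> 'k) \<Rightarrow> ('i \<Rightarrow> 'k) \<Rightarrow> ('i \<Rightarrow> 'k) \<Rightarrow> ('i \<Rightarrow> 'k)
    \<Rightarrow> ('i \<times> 'i \<times> 'i \<Rightarrow> 'k)" where
  "residue3 x a b c d =
    - tens3 a c (pr b (pr d x)) - tens3 a c (pr b (sc d x)) - tens3 a d (sc (pr b x) c)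
    - tens3 a d (sc (pr x b) c) - tens3 a d (sc (sc b x) c) - tens3 a d (sc (sc x b) c)
    + tens3 a (pr b c) (pr d x) + tens3 a (pr c x) (pr b d) - tens3 a (pr (pr b c) x) d
    - tens3 a (pr (pr b x) c) d - tens3 a (sc c (pr b x)) d + tens3 a (sc x c) (pr b d)
    - tens3 a (sc x (pr b c)) d - tens3 b c (pr (pr a d) x) + tens3 b c (sc (pr d x) a)
    + tens3 b c (sc (pr x d) a) + tens3 b c (sc (sc d x) a) + tens3 b c (sc (sc x d) a)
    + tens3 b d (sc (pr c x) a) + tens3 b d (sc (pr x c) a) + tens3 b d (sc (sc c x) a)
    + tens3 b d (sc (sc x c) a) + tens3 b (pr a c) (pr d x) + tens3 b (pr c x) (pr a d)
    + tens3 b (pr (pr a d) x) c + tens3 b (pr (sc c a) x) d + tens3 b (pr (sc d a) x) c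
    + tens3 b (sc x c) (pr a d) - tens3 b (sc x (pr a c)) d - tens3 (pr a c) b (pr d x)
    + tens3 (pr a c) d (pr b x) + tens3 (pr a d) c (pr b x) - tens3 (pr a d) (pr c x) b
    - tens3 (pr a d) (sc x c) b - tens3 (pr a x) c (pr d b) - tens3 (pr a x) d (pr c b)
    + tens3 (pr a x) (pr b c) d + tens3 (pr a x) (pr c b) d + tens3 (pr a x) (pr d b) c
    + tens3 (pr a x) (sc b c) d + tens3 (pr a x) (sc c b) d + tens3 (pr a x) (sc d b) c
    + tens3 (pr a (pr c x)) b d + tens3 (pr a (pr x c)) b d + tens3 (pr a (sc c x)) b d
    + tens3 (pr a (sc x c)) b d - tens3 (pr b c) a (pr d x) + tens3 (pr b c) (pr a x) d
    + tens3 (pr b c) (sc x a) d + tens3 (pr b d) c (pr a x) - tens3 (pr b d) (pr c x) a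
    - tens3 (pr b d) (sc x c) a - tens3 (pr x b) c (sc d a) - tens3 (pr x b) (pr a c) d
    - tens3 (pr x b) (sc c a) d + tens3 (pr x (pr b c)) a d + tens3 (pr x (sc b c)) a d
    + tens3 (pr (pr a d) x) b c - tens3 (pr (pr a x) c) d b - tens3 (pr (pr x a) c) d b
    - tens3 (pr (sc a c) x) d b - tens3 (pr (sc a x) c) d b - tens3 (pr (sc b c) x) d a
    - tens3 (pr (sc x a) c) d b - tens3 (sc a c) b (pr d x) + tens3 (sc a c) d (pr b x)
    + tens3 (sc a d) c (pr b x) - tens3 (sc a d) (pr c x) b - tens3 (sc a d) (sc x c) b
    - tens3 (sc a x) c (pr d b) - tens3 (sc a x) d (pr c b) + tens3 (sc a x) (pr b c) d
    + tens3 (sc a x) (pr c b) d + tens3 (sc a x) (pr d b) c + tens3 (sc a x) (sc b c) d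
    + tens3 (sc a x) (sc c b) d + tens3 (sc a x) (sc d b) c + tens3 (sc a (pr c x)) b d
    + tens3 (sc a (pr x c)) b d + tens3 (sc a (sc c x)) b d + tens3 (sc a (sc x c)) b d
    - tens3 (sc b c) a (pr d x) + tens3 (sc b c) (pr a x) d + tens3 (sc b c) (sc x a) d
    + tens3 (sc b d) c (pr a x) - tens3 (sc b d) (pr c x) a - tens3 (sc b d) (sc x c) a
    - tens3 (sc x a) c (pr d b) - tens3 (sc x a) d (pr c b) + tens3 (sc x a) (pr b c) d
    + tens3 (sc x a) (pr c b) d + tens3 (sc x a) (pr d b) c + tens3 (sc x a) (sc b c) d
    + tens3 (sc x a) (sc c b) d + tens3 (sc x a) (sc d b) c - tens3 (sc x (pr a c)) b d
    - tens3 (sc (pr a c) x) b d - tens3 (sc (pr a x) c) d b - tens3 (sc (pr x a) c) d b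
    - tens3 (sc (sc a x) c) d b - tens3 (sc (sc x a) c) d b"

lemma Delta_coalgebra3:
  "mapI_D (\<lambda>x. Ds x + Dp x) (Dp x) = mapD_I Dp (Dp x) + tau12 (mapI_D Dp (Ds x))"
proof -
  have "mapI_D (\<lambda>x. Ds x + Dp x) (Dp x) - (mapD_I Dp (Dp x) + tau12 (mapI_D Dp (Ds x))) =
      contract r (\<lambda>a b. contract r (\<lambda>c d.
      - yb_term (\<lambda>u v w. tens3 w (pr v x) u) a b c d
      + yb_term (\<lambda>u v w. tens3 (sc x u) v w) a b c d
      - yb_term (\<lambda>u v w. tens3 (sc x v) w u) a b c d
      - yb_term (\<lambda>u v w. tens3 (sc x u) w v) a b c d
      - yb_term (\<lambda>u v w. tens3 w (pr u x) v) a b c d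
      + yb_term (\<lambda>u v w. tens3 (sc u x) v w) a b c d
      - yb_term (\<lambda>u v w. tens3 (sc v x) w u) a b c d
      - yb_term (\<lambda>u v w. tens3 (sc u x) w v) a b c d
      + yb_term (\<lambda>u v w. tens3 (pr u x) v w) a b c d
      - yb_term (\<lambda>u v w. tens3 (pr v x) w u) a b c d
      - yb_term (\<lambda>u v w. tens3 (pr u x) w v) a b c d
      - yb_term (\<lambda>u v w. tens3 w (sc x u) v) a b c d
      - yb_term (\<lambda>u v w. tens3 (pr x w) v u) a b c d
      + yb_term (\<lambda>u v w. tens3 w v (pr u x)) a b c d
      + yb_term (\<lambda>u v w. tens3 w u (pr v x)) a b c d
      - yb_term (\<lambda>u v w. tens3 w (sc x v) u) a b c d
      + inv_prec_term (\<lambda>t1 t2. tens3 t1 t2 (pr d x)) c a b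
      - inv_prec_term (\<lambda>t1 t2. tens3 t1 (sc x t2) d) c a b
      - inv_prec_term (\<lambda>t1 t2. tens3 t1 (pr t2 x) d) c a b
      + inv_succ_term (\<lambda>t1 t2. tens3 (sc c t2) t1 d) x a b
      + inv_succ_term (\<lambda>t1 t2. tens3 (pr c t2) t1 d) x a b
      + inv_succ_term (\<lambda>t1 t2. tens3 (sc t2 c) t1 d) x a b
      + inv_succ_term (\<lambda>t1 t2. tens3 (pr t2 c) t1 d) x a b
      + inv_prec_term (\<lambda>t1 t2. tens3 d t2 (sc t1 c)) x a b
      + inv_prec_term (\<lambda>t1 t2. tens3 (sc x c) t1 t2) d a b
      - inv_prec_term (\<lambda>t1 t2. tens3 (sc t1 x) d t2) c a b
      + inv_succ_term (\<lambda>t1 t2. tens3 (sc t1 x) d t2) c a b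
      + inv_prec_term (\<lambda>t1 t2. tens3 t2 d (sc t1 c)) x a b
      - inv_prec_term (\<lambda>t1 t2. tens3 t1 c (pr t2 x)) d a b
      + inv_prec_term (\<lambda>t1 t2. tens3 t1 (pr c x) t2) d a b
      + inv_prec_term (\<lambda>t1 t2. tens3 (sc c x) t1 t2) d a b
      + inv_prec_term (\<lambda>t1 t2. tens3 (pr c x) t1 t2) d a b
      + inv_succ_term (\<lambda>t1 t2. tens3 (sc x t1) d t2) c a b
      - inv_prec_term (\<lambda>t1 t2. tens3 (sc x t1) d t2) c a b
      + inv_prec_term (\<lambda>t1 t2. tens3 (pr x t1) c t2) d a b
      + inv_succ_term (\<lambda>t1 t2. tens3 (pr x t2) c t1) d a b
      + inv_succ_term (\<lambda>t1 t2. tens3 (pr x t2) t1 d) c a b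
      + inv_prec_term (\<lambda>t1 t2. tens3 d t1 (pr t2 x)) c a b
      + inv_prec_term (\<lambda>t1 t2. tens3 t1 (sc x c) t2) d a b
      + inv_succ_term (\<lambda>t1 t2. tens3 (pr x d) t1 t2) c a b
      - inv_prec_term (\<lambda>t1 t2. tens3 (pr x d) t1 t2) c a b
      - inv_succ_term (\<lambda>t1 t2. tens3 d t1 (pr t2 x)) c a b
      + inv_succ_term (\<lambda>t1 t2. tens3 d (sc x t1) t2) c a b
      - inv_prec_term (\<lambda>t1 t2. tens3 d (sc x t1) t2) c a b + tens3 c (ld_defect3 d x a) b
      + tens3 (ld_defect3 x c a) b d - tens3 (ld_defect2 c x a) b d - tens3 (ld_defect1 x c a) b d
      - tens3 (ld_defect1 c x a) b d - tens3 (ld_defect2 x c a) b d + tens3 (ld_defect3 c x a) b d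
      + tens3 (ld_defect2 a c x) b d + tens3 (ld_defect1 a x c) b d - tens3 (ld_defect3 a x c) b d
      + tens3 c (ld_defect3 d a x) b + tens3 b (ld_defect3 a c x) d - tens3 (ld_defect2 c a x) b d
      - tens3 b d (ld_defect1 x c a) - tens3 b d (ld_defect1 c x a) + tens3 b (ld_defect3 a d x) c
      - tens3 b c (ld_defect1 x d a) - tens3 b c (ld_defect1 d x a) + tens3 (ld_defect1 a c x) b d
      - tens3 b d (ld_defect1 x a c) - tens3 b d (ld_defect1 a x c) - tens3 c b (ld_defect1 x d a)
      - tens3 c b (ld_defect1 d x a) + tens3 a c (ld_defect3 b d x) - tens3 (ld_defect2 d a x) b c
      + tens3 (ld_defect3 a d x) b c + tens3 (ld_defect2 a x c) b d - tens3 b (ld_defect2 c a x) d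
      - tens3 b (ld_defect2 d a x) c + swap_diff (residue3 x) a b c d))"
    by (simp only: push_simps, intro contract_cong tensor3_eqI,
        simp add: expand_simps residue3_def, algebra)
  also have "\<dots> = 0"
    by (simp only: vanishing_simps)
  finally show ?thesis by (simp only: right_minus_eq)
qed

lemma Delta_B1:
  "Ds (od x y) + Dp (od x y) - map2 id (Lm od x) (Ds y + Dp y) + tau (map2 id (Lm od x) (Ds y
   + Dp y)) + tau (map2 id (Rm od y) (Ds x)) - map2 id (Rm od y) (Ds x) = 0"
proof -
  have "Ds (od x y) + Dp (od x y) - map2 id (Lm od x) (Ds y + Dp y) + tau (map2 id (Lm od x) (Ds y
      + Dp y)) + tau (map2 id (Rm od y) (Ds x)) - map2 id (Rm od y) (Ds x) =
      contract r (\<lambda>a b. inv_succ_term (\<lambda>t1 t2. tens2 (sc t2 y) t1) x a b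
      - inv_succ_term (\<lambda>t1 t2. tens2 t1 (pr y t2)) x a b
      - inv_succ_term (\<lambda>t1 t2. tens2 t1 (pr t2 x)) y a b
      + inv_succ_term (\<lambda>t1 t2. tens2 (pr t2 x) t1) y a b
      + inv_succ_term (\<lambda>t1 t2. tens2 (sc x t1) t2) y a b
      + inv_succ_term (\<lambda>t1 t2. tens2 (pr y t2) t1) x a b
      + inv_succ_term (\<lambda>t1 t2. tens2 t1 t2) (pr y x) a b
      + inv_succ_term (\<lambda>t1 t2. tens2 t1 t2) (sc y x) a b
      - inv_succ_term (\<lambda>t1 t2. tens2 (pr t1 y) t2) x a b
      - inv_succ_term (\<lambda>t1 t2. tens2 t1 (sc y t2)) x a b
      - inv_succ_term (\<lambda>t1 t2. tens2 t1 (sc t2 x)) y a b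
      - inv_succ_term (\<lambda>t1 t2. tens2 (sc y t1) t2) x a b
      + inv_succ_term (\<lambda>t1 t2. tens2 (pr t1 x) t2) y a b
      + inv_succ_term (\<lambda>t1 t2. tens2 (sc x t2) t1) y a b + tens2 (ld_defect1 a x y) b
      + tens2 (ld_defect3 y x a) b - tens2 (ld_defect2 x y a) b + tens2 (ld_defect2 a y x) b
      - tens2 (ld_defect1 y x a) b - tens2 (ld_defect1 y x b) a - tens2 b (ld_defect2 a y x)
      - tens2 b (ld_defect1 a y x) - tens2 a (ld_defect1 b y x) + tens2 b (ld_defect3 a y x)
      + tens2 a (ld_defect3 b y x) - tens2 (ld_defect3 a x y) b + tens2 (ld_defect2 x a y) b
      - tens2 (ld_defect3 b x y) a + tens2 (ld_defect2 x b y) a + tens2 a (ld_defect1 b x y)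
      - tens2 (ld_defect2 y a x) b - tens2 (ld_defect2 y b x) a)"
    by (simp only: push_simps, intro contract_cong tensor2_eqI,
        simp add: expand_simps, algebra)
  also have "\<dots> = 0"
    by (simp only: vanishing_simps)
  finally show ?thesis .
qed

lemma Delta_B2:
  "Ds (sc x y) + Dp (sc x y) - (map2 (Lm sc x) id (Ds y + Dp y) + map2 id (Lm sc x) (Ds y + Dp y))
   - map2 id (Rm sc y) (Ds x + tau (Dp x)) + tau (map2 id (Rm od y) (Ds x + tau (Dp x))) = 0"
proof -
  have "Ds (sc x y) + Dp (sc x y) - (map2 (Lm sc x) id (Ds y + Dp y) + map2 id (Lm sc x) (Ds y
      + Dp y)) - map2 id (Rm sc y) (Ds x + tau (Dp x)) + tau (map2 id (Rm od y) (Ds x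
      + tau (Dp x))) =
      contract r (\<lambda>a b. inv_succ_term (\<lambda>t1 t2. tens2 (pr y t2) t1) x a b
      + inv_succ_term (\<lambda>t1 t2. tens2 (sc t2 y) t1) x a b
      + inv_prec_term (\<lambda>t1 t2. tens2 t2 (sc t1 y)) x a b - tens2 (ld_defect2 x y a) b
      - tens2 (ld_defect1 x a y) b - tens2 a (ld_defect1 x b y))"
    by (simp only: push_simps, intro contract_cong tensor2_eqI,
        simp add: expand_simps, algebra)
  also have "\<dots> = 0"
    by (simp only: vanishing_simps)
  finally show ?thesis .
qed

lemma Delta_B3:
  "map2 id (Rm sc y) (tau (Dp x)) - map2 (Rm pr x) id (Ds y + Dp y) = 0"
proof -
  have "map2 id (Rm sc y) (tau (Dp x)) - map2 (Rm pr x) id (Ds y + Dp y) =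
      contract r (\<lambda>a b. - inv_prec_term (\<lambda>t1 t2. tens2 t2 (sc t1 y)) x a b
      + tens2 (ld_defect2 a y x) b - tens2 (ld_defect3 y a x) b + tens2 a (ld_defect1 b x y)
      + tens2 a (ld_defect1 x b y))"
    by (simp only: push_simps, intro contract_cong tensor2_eqI,
        simp add: expand_simps, algebra)
  also have "\<dots> = 0"
    by (simp only: vanishing_simps)
  finally show ?thesis .
qed

lemma Delta_B4:
  "Ds (ci x y) + tau (Dp (ci x y)) - (map2 id (Lm ci x) (Ds y + tau (Dp y))
   + map2 (Lm sc x) id (Ds y + tau (Dp y))) + (map2 id (Lm ci y) (Ds x + tau (Dp x))
   + map2 (Lm sc y) id (Ds x + tau (Dp x))) = 0"
proof -
  have "Ds (ci x y) + tau (Dp (ci x y)) - (map2 id (Lm ci x) (Ds y + tau (Dp y))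
      + map2 (Lm sc x) id (Ds y + tau (Dp y))) + (map2 id (Lm ci y) (Ds x + tau (Dp x))
      + map2 (Lm sc y) id (Ds x + tau (Dp x))) =
      contract r (\<lambda>a b. inv_succ_term (\<lambda>t1 t2. tens2 t1 (pr y t2)) x a b
      - inv_succ_term (\<lambda>t1 t2. tens2 t1 (pr x t2)) y a b
      + inv_succ_term (\<lambda>t1 t2. tens2 t1 t2) (sc x y) a b
      - inv_succ_term (\<lambda>t1 t2. tens2 t1 (sc x t2)) y a b
      - inv_succ_term (\<lambda>t1 t2. tens2 (sc x t1) t2) y a b
      + inv_succ_term (\<lambda>t1 t2. tens2 t1 t2) (pr x y) a b
      + inv_succ_term (\<lambda>t1 t2. tens2 t1 (sc y t2)) x a b
      + inv_succ_term (\<lambda>t1 t2. tens2 (sc y t1) t2) x a b + tens2 b (ld_defect3 x y a)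
      - tens2 b (ld_defect2 x y a) - tens2 b (ld_defect1 x y a) - tens2 (ld_defect1 x y b) a)"
    by (simp only: push_simps, intro contract_cong tensor2_eqI,
        simp add: expand_simps, algebra)
  also have "\<dots> = 0"
    by (simp only: vanishing_simps)
  finally show ?thesis .
qed

lemma Delta_B5:
  "Ds (ci x y) - map2 id (Rm ci y) (Ds x) - (map2 id (Lm ci x) (Ds y) + map2 (Lm od x) id (Ds y))
   + map2 (Lm od y) id (Ds x + tau (Dp x)) = 0"
proof -
  have "Ds (ci x y) - map2 id (Rm ci y) (Ds x) - (map2 id (Lm ci x) (Ds y)
      + map2 (Lm od x) id (Ds y)) + map2 (Lm od y) id (Ds x + tau (Dp x)) =
      contract r (\<lambda>a b. - inv_succ_term (\<lambda>t1 t2. tens2 t1 (pr x t2)) y a b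
      - inv_succ_term (\<lambda>t1 t2. tens2 t1 (pr t2 y)) x a b
      + inv_succ_term (\<lambda>t1 t2. tens2 t1 t2) (pr x y) a b
      + inv_succ_term (\<lambda>t1 t2. tens2 (pr t1 y) t2) x a b
      + inv_succ_term (\<lambda>t1 t2. tens2 (sc y t1) t2) x a b
      + inv_succ_term (\<lambda>t1 t2. tens2 t1 t2) (sc x y) a b
      - inv_succ_term (\<lambda>t1 t2. tens2 t1 (sc x t2)) y a b
      - inv_succ_term (\<lambda>t1 t2. tens2 (pr t1 x) t2) y a b
      - inv_succ_term (\<lambda>t1 t2. tens2 t1 (sc t2 y)) x a b
      - inv_succ_term (\<lambda>t1 t2. tens2 (sc x t1) t2) y a b - tens2 b (ld_defect2 a x y)
      - tens2 (ld_defect1 x y b) a - tens2 (ld_defect2 x b y) a - tens2 b (ld_defect1 a x y)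
      + tens2 b (ld_defect3 a x y) - tens2 (ld_defect3 b y x) a + tens2 (ld_defect2 y b x) a)"
    by (simp only: push_simps, intro contract_cong tensor2_eqI,
        simp add: expand_simps, algebra)
  also have "\<dots> = 0"
    by (simp only: vanishing_simps)
  finally show ?thesis .
qed

lemma Delta_B6:
  "map2 id (Rm ci y) (tau (Dp x)) - map2 (Rm pr x) id (Ds y) = 0"
proof -
  have "map2 id (Rm ci y) (tau (Dp x)) - map2 (Rm pr x) id (Ds y) =
      contract r (\<lambda>a b. - inv_succ_term (\<lambda>t1 t2. tens2 (pr t1 x) t2) y a b
      - tens2 b (ld_defect2 a x y) + tens2 b (ld_defect3 x a y) - tens2 b (ld_defect1 a x y)
      - tens2 b (ld_defect1 x a y) + tens2 b (ld_defect3 a x y) - tens2 b (ld_defect2 x a y)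
      - tens2 (ld_defect3 b y x) a + tens2 (ld_defect2 y b x) a)"
    by (simp only: push_simps, intro contract_cong tensor2_eqI,
        simp add: expand_simps, algebra)
  also have "\<dots> = 0"
    by (simp only: vanishing_simps)
  finally show ?thesis .
qed

end

theorem mainTheorem7:
  fixes sc pr :: "('i::finite \<Rightarrow> 'k::field) \<Rightarrow> ('i \<Rightarrow> 'k) \<Rightarrow> ('i \<Rightarrow> 'k)"
    and r :: "'i \<times> 'i \<Rightarrow> 'k"
  assumes "LD_algebra sc pr"
    and "S_YB sc pr r = 0"
    and "invariant sc pr (r + tau r)"
  shows "LD_bialgebra sc pr (Delta_succ sc pr r) (Delta_prec sc pr r)"
proof -
  interpret LD_quasitriangular sc pr r
    using assms by unfold_locales
  show ?thesis
    unfolding LD_bialgebra_def Let_def Delta_succ_eq Delta_prec_eq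
    by (intro conjI allI LD_algebra linear_Ds_Dp Delta_coalgebra1 Delta_coalgebra2 Delta_coalgebra3
        Delta_B1 Delta_B2 Delta_B3 Delta_B4 Delta_B5 Delta_B6)
qed

end
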